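(* Let $(\mathcal M_i,\phi_{ij})$ be an inverse system of local Moufang sets over a directed set $(I,\succcurlyeq)$, where $\mathcal M_i=(X_i,(U^{(i)}_x)_{x\in X_i})$. Let $L:=\{(x_i)_{i\in I}\in\prod_iX_i\mid x_i\phi_{ij}=x_j\text{ for all }i\succcurlyeq j\}$. Then for $(x_i),(y_i)\in L$, $x_i\sim y_i$ holds for some $i\in I$ iff it holds for all $i\in I$; declare $(x_i)\sim(y_i)$ in that case, an equivalence relation on $L$. For $x=(x_i)\in L$ let $U_x:=\{(u_i)\in\prod_iU^{(i)}_{x_i}\mid u_i\phi_{ij}=\phi_{ij}u_j\text{ for all }i\succcurlyeq j\}$, acting on $L$ componentwise. If $L$ has more than two $\sim$-classes, then $(L,(U_x)_{x\in L})$ is a local Moufang set, and together with the projections $p_j:L\to X_j$, $(x_i)\mapsto x_j$ (which are homomorphisms), it is an inverse limit of $(\mathcal M_i,\phi_{ij})$ in the category of local Moufang sets: $\phi_{ij}\circ p_i=p_j$ for $i\succcurlyeq j$, and for every local Moufang set $\mathcal M$ with homomorphisms $q_i:\mathcal M\to\mathcal M_i$ satisfying $\phi_{ij}\circ q_i=q_j$ there is a unique homomorphism $\psi:\mathcal M\to(L,(U_x))$ with $p_i\circ\psi=q_i$ for all $i$.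
   Context: Group actions are right actions; maps composed left to right ($u\phi$: first $u$, then $\phi$). For $(X,\sim)$, $\overline x$ is the class of $x$, $\overline X$ the set of classes, $\mathrm{Sym}(X,\sim)$ the bijections $g$ with $x\sim y\iff xg\sim yg$, $\overline U$ the induced group on $\overline X$. A local Moufang set is $(X,\sim)$ with $|\overline X|>2$ and subgroups $U_x\le\mathrm{Sym}(X,\sim)$ ($x\in X$) with: (LM0) $x\sim y\Rightarrow\overline{U_x}=\overline{U_y}$; (LM1) $U_x$ fixes $x$ and is sharply transitive on $X\setminus\overline x$; (LM1') $\overline{U_x}$ fixes $\overline x$ and is sharply transitive on $\overline X\setminus\{\overline x\}$; (LM2) $U_x^g=U_{xg}$ for all $x$ and all $g\in\langle U_y\rangle$, where $g^h=h^{-1}gh$. A homomorphism $(X,(U_x))\to(Y,(V_y))$ is a map $\phi:X\to Y$ with $x\sim x'\iff x\phi\sim x'\phi$ and $U_x\phi\subseteq\phi V_{x\phi}$ for all $x$. The category of local Moufang sets has these as objects and morphisms. A directed set is a nonempty partially ordered set in which any two elements have a common upper bound. An inverse system over $I$ consists of local Moufang sets $\mathcal M_i$ ($i\in I$) and homomorphisms $\phi_{ij}:\mathcal M_i\to\mathcal M_j$ for $i\succcurlyeq j$ with $\phi_{ii}=\mathrm{id}$ and $\phi_{jk}\circ\phi_{ij}=\phi_{ik}$ for $i\succcurlyeq j\succcurlyeq k$. *)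

theory Defs
  imports "HOL-Algebra.Bij" "HOL-Algebra.Generated_Groups" "HOL-Library.FuncSet"
begin

text \<open>Permutations of a set X are the extensional bijections
  Bij X of HOL-Algebra. The paper's right actions are written as function
  application: x u is written u x. Composition "first u, then v" is the function
  composition v o u (compose X v u); in BijGroup X the product g \<otimes> f is compose X g f.\<close>

definition more_than_two :: "'a set \<Rightarrow> bool" where
  "more_than_two S \<longleftrightarrow> (\<exists>a\<in>S. \<exists>b\<in>S. \<exists>c\<in>S. a \<noteq> b \<and> a \<noteq> c \<and> b \<noteq> c)"

definition SymR :: "'a set \<Rightarrow> ('a \<times> 'a) set \<Rightarrow> ('a \<Rightarrow> 'a) set" where
  "SymR X R = {g \<in> Bij X. \<forall>x\<in>X. \<forall>y\<in>X. (x, y) \<in> R \<longleftrightarrow> (g x, g y) \<in> R}"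

definition induced :: "'a set \<Rightarrow> ('a \<times> 'a) set \<Rightarrow> ('a \<Rightarrow> 'a) \<Rightarrow> ('a set \<Rightarrow> 'a set)" where
  "induced X R g = (\<lambda>C \<in> X // R. g ` C)"

definition local_moufang_set ::
  "'a set \<Rightarrow> ('a \<times> 'a) set \<Rightarrow> ('a \<Rightarrow> ('a \<Rightarrow> 'a) set) \<Rightarrow> bool" where
  "local_moufang_set X R U \<longleftrightarrow>
     equiv X R \<and> more_than_two (X // R) \<and>
     (\<forall>x\<in>X. subgroup (U x) (BijGroup X) \<and> U x \<subseteq> SymR X R) \<and>
     \<comment> \<open>(LM0)\<close>
     (\<forall>x\<in>X. \<forall>y\<in>X. (x, y) \<in> R \<longrightarrow> induced X R ` U x = induced X R ` U y) \<and>
     \<comment> \<open>(LM1)\<close>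
     (\<forall>x\<in>X. (\<forall>u\<in>U x. u x = x \<and> u ` (X - R `` {x}) = X - R `` {x}) \<and>
        (\<forall>y\<in>X - R `` {x}. \<forall>z\<in>X - R `` {x}. \<exists>!u. u \<in> U x \<and> u y = z)) \<and>
     \<comment> \<open>(LM1')\<close>
     (\<forall>x\<in>X. (\<forall>v\<in>induced X R ` U x. v (R `` {x}) = R `` {x} \<and>
                 v ` (X // R - {R `` {x}}) = X // R - {R `` {x}}) \<and>
        (\<forall>C\<in>X // R - {R `` {x}}. \<forall>D\<in>X // R - {R `` {x}}.
            \<exists>!v. v \<in> induced X R ` U x \<and> v C = D)) \<and>
     \<comment> \<open>(LM2): U_x^g = g^{-1} U_x g = U_{xg}; with functions: g o u o g^{-1}\<close>
     (\<forall>x\<in>X. \<forall>g\<in>generate (BijGroup X) (\<Union>y\<in>X. U y).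
        (\<lambda>u. g \<otimes>\<^bsub>BijGroup X\<^esub> u \<otimes>\<^bsub>BijGroup X\<^esub> inv\<^bsub>BijGroup X\<^esub> g) ` U x = U (g x))"

definition lms_hom ::
  "'a set \<Rightarrow> ('a \<times> 'a) set \<Rightarrow> ('a \<Rightarrow> ('a \<Rightarrow> 'a) set) \<Rightarrow>
   'b set \<Rightarrow> ('b \<times> 'b) set \<Rightarrow> ('b \<Rightarrow> ('b \<Rightarrow> 'b) set) \<Rightarrow> ('a \<Rightarrow> 'b) \<Rightarrow> bool" where
  "lms_hom X R U Y S V \<phi> \<longleftrightarrow>
     \<phi> \<in> X \<rightarrow>\<^sub>E Y \<and>
     (\<forall>x\<in>X. \<forall>x'\<in>X. (x, x') \<in> R \<longleftrightarrow> (\<phi> x, \<phi> x') \<in> S) \<and>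
     (\<forall>x\<in>X. \<forall>u\<in>U x. \<exists>v\<in>V (\<phi> x). \<forall>y\<in>X. \<phi> (u y) = v (\<phi> y))"

definition directed_set :: "'i set \<Rightarrow> ('i \<Rightarrow> 'i \<Rightarrow> bool) \<Rightarrow> bool" where
  "directed_set I ge \<longleftrightarrow> I \<noteq> {} \<and>
     (\<forall>i\<in>I. ge i i) \<and>
     (\<forall>i\<in>I. \<forall>j\<in>I. ge i j \<and> ge j i \<longrightarrow> i = j) \<and>
     (\<forall>i\<in>I. \<forall>j\<in>I. \<forall>k\<in>I. ge i j \<and> ge j k \<longrightarrow> ge i k) \<and>
     (\<forall>i\<in>I. \<forall>j\<in>I. \<exists>k\<in>I. ge k i \<and> ge k j)"

definition inverse_system ::
  "'i set \<Rightarrow> ('i \<Rightarrow> 'i \<Rightarrow> bool) \<Rightarrow> ('i \<Rightarrow> 'a set) \<Rightarrow> ('i \<Rightarrow> ('a \<times> 'a) set) \<Rightarrow>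
   ('i \<Rightarrow> 'a \<Rightarrow> ('a \<Rightarrow> 'a) set) \<Rightarrow> ('i \<Rightarrow> 'i \<Rightarrow> 'a \<Rightarrow> 'a) \<Rightarrow> bool" where
  "inverse_system I ge X R U \<phi> \<longleftrightarrow>
     directed_set I ge \<and>
     (\<forall>i\<in>I. local_moufang_set (X i) (R i) (U i)) \<and>
     (\<forall>i\<in>I. \<forall>j\<in>I. ge i j \<longrightarrow> lms_hom (X i) (R i) (U i) (X j) (R j) (U j) (\<phi> i j)) \<and>
     (\<forall>i\<in>I. \<phi> i i = (\<lambda>x\<in>X i. x)) \<and>
     (\<forall>i\<in>I. \<forall>j\<in>I. \<forall>k\<in>I. ge i j \<and> ge j k \<longrightarrow> compose (X i) (\<phi> j k) (\<phi> i j) = \<phi> i k)"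

definition lim_set ::
  "'i set \<Rightarrow> ('i \<Rightarrow> 'i \<Rightarrow> bool) \<Rightarrow> ('i \<Rightarrow> 'a set) \<Rightarrow> ('i \<Rightarrow> 'i \<Rightarrow> 'a \<Rightarrow> 'a) \<Rightarrow> ('i \<Rightarrow> 'a) set" where
  "lim_set I ge X \<phi> = {x \<in> (\<Pi>\<^sub>E i\<in>I. X i). \<forall>i\<in>I. \<forall>j\<in>I. ge i j \<longrightarrow> \<phi> i j (x i) = x j}"

definition lim_rel ::
  "'i set \<Rightarrow> ('i \<Rightarrow> 'i \<Rightarrow> bool) \<Rightarrow> ('i \<Rightarrow> 'a set) \<Rightarrow> ('i \<Rightarrow> ('a \<times> 'a) set) \<Rightarrow>
   ('i \<Rightarrow> 'i \<Rightarrow> 'a \<Rightarrow> 'a) \<Rightarrow> (('i \<Rightarrow> 'a) \<times> ('i \<Rightarrow> 'a)) set" where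
  "lim_rel I ge X R \<phi> = {(x, y). x \<in> lim_set I ge X \<phi> \<and> y \<in> lim_set I ge X \<phi> \<and>
                                 (\<exists>i\<in>I. (x i, y i) \<in> R i)}"

definition lim_root_group ::
  "'i set \<Rightarrow> ('i \<Rightarrow> 'i \<Rightarrow> bool) \<Rightarrow> ('i \<Rightarrow> 'a set) \<Rightarrow> ('i \<Rightarrow> 'a \<Rightarrow> ('a \<Rightarrow> 'a) set) \<Rightarrow>
   ('i \<Rightarrow> 'i \<Rightarrow> 'a \<Rightarrow> 'a) \<Rightarrow> ('i \<Rightarrow> 'a) \<Rightarrow> (('i \<Rightarrow> 'a) \<Rightarrow> ('i \<Rightarrow> 'a)) set" where
  "lim_root_group I ge X U \<phi> x =
     {(\<lambda>y\<in>lim_set I ge X \<phi>. \<lambda>i\<in>I. u i (y i)) | u.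
        u \<in> (\<Pi>\<^sub>E i\<in>I. U i (x i)) \<and>
        (\<forall>i\<in>I. \<forall>j\<in>I. ge i j \<longrightarrow> (\<forall>z\<in>X i. \<phi> i j (u i z) = u j (\<phi> i j z)))}"

definition lim_proj :: "'i set \<Rightarrow> ('i \<Rightarrow> 'i \<Rightarrow> bool) \<Rightarrow> ('i \<Rightarrow> 'a set) \<Rightarrow>
   ('i \<Rightarrow> 'i \<Rightarrow> 'a \<Rightarrow> 'a) \<Rightarrow> 'i \<Rightarrow> ('i \<Rightarrow> 'a) \<Rightarrow> 'a" where
  "lim_proj I ge X \<phi> j = (\<lambda>x\<in>lim_set I ge X \<phi>. x j)"

end

theory Submission
  imports Defs "HOL-Algebra.Product_Groups"
begin

text \<open>Since the bonding maps preserve and reflect \<open>\<sim>\<close> and \<open>I\<close> is directed, two threads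
  are related in one component iff in all. The key rigidity fact is that in a local Moufang set a
  root element is determined by its value at a single point opposite its base, while homomorphisms
  carry root elements to root elements; hence a family of root elements \<open>u\<^sub>i \<in> U\<^sub>i (x\<^sub>i)\<close> that
  commutes with the bonding maps at one thread opposite \<open>x\<close> commutes with them everywhere. This
  gives (LM1) for the limit, and (LM0), (LM1') follow componentwise. The compatible families form a
  subgroup of the product of the groups \<open>Sym(X\<^sub>i)\<close> acting on the limit through a homomorphism, so
  the group generated by the root groups of the limit consists of compatible families of elements
  of the groups generated by the root groups of the components, and (LM2) holds componentwise.
  Finally a compatible cone \<open>(q\<^sub>i)\<close> lifts to \<open>y \<mapsto> (q\<^sub>i y)\<close>, and its compatibility with the
  root groups is the same rigidity argument.\<close>

lemma carrier_BijGroup [simp]: "carrier (BijGroup S) = Bij S"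
  by (simp add: BijGroup_def)

lemma one_BijGroup [simp]: "\<one>\<^bsub>BijGroup S\<^esub> = (\<lambda>x\<in>S. x)"
  by (simp add: BijGroup_def)

lemma BijGroup_mult: "f \<in> Bij S \<Longrightarrow> g \<in> Bij S \<Longrightarrow> f \<otimes>\<^bsub>BijGroup S\<^esub> g = compose S f g"
  by (simp add: BijGroup_def)

lemma BijGroup_mult_apply: "f \<in> Bij S \<Longrightarrow> g \<in> Bij S \<Longrightarrow> x \<in> S \<Longrightarrow> (f \<otimes>\<^bsub>BijGroup S\<^esub> g) x = f (g x)"
  by (simp add: BijGroup_def compose_def)

lemma Bij_apply: "f \<in> Bij S \<Longrightarrow> x \<in> S \<Longrightarrow> f x \<in> S"
  using Bij_imp_funcset by blast

lemma BijGroup_inv_apply: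
  assumes f: "f \<in> Bij S" and x: "x \<in> S"
  shows "f ((inv\<^bsub>BijGroup S\<^esub> f) x) = x" "(inv\<^bsub>BijGroup S\<^esub> f) (f x) = x"
    "(inv\<^bsub>BijGroup S\<^esub> f) x \<in> S"
proof -
  have "bij_betw f S S" using f by (simp add: Bij_def)
  then show "f ((inv\<^bsub>BijGroup S\<^esub> f) x) = x" "(inv\<^bsub>BijGroup S\<^esub> f) (f x) = x"
    "(inv\<^bsub>BijGroup S\<^esub> f) x \<in> S"
    using x Bij_apply[OF f x]
    by (simp_all add: inv_BijGroup[OF f] bij_betw_inv_into_right bij_betw_inv_into_left
        bij_betw_apply[OF bij_betw_inv_into])
qed

lemma (in group) conj_inv_conj:
  "g \<in> carrier G \<Longrightarrow> v \<in> carrier G \<Longrightarrow> g \<otimes> (inv g \<otimes> v \<otimes> g) \<otimes> inv g = v"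
  by (simp add: m_assoc flip: m_assoc[of g "inv g"])

lemma bij_betw_image_Diff:
  assumes "bij_betw f S S" "A \<subseteq> S" "f ` A = A"
  shows "f ` (S - A) = S - A"
  using assms inj_on_image_set_diff[of f S S A] by (simp add: bij_betw_def)

lemma quotient_more_than_two_ex_unrelated:
  assumes "equiv S R" "more_than_two (S // R)" "x \<in> S"
  shows "\<exists>y\<in>S. (x, y) \<notin> R"
proof -
  obtain C where "C \<in> S // R" "C \<noteq> R `` {x}"
    using assms(2) unfolding more_than_two_def by metis
  then show ?thesis
    using assms(1) by (auto simp: quotient_def dest: equiv_class_eq)
qed

lemma SymR_Bij: "g \<in> SymR S R \<Longrightarrow> g \<in> Bij S"
  by (simp add: SymR_def)

lemma SymR_image_class:
  assumes eq: "equiv S R" and g: "g \<in> SymR S R" and c: "c \<in> S"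
  shows "g ` (R `` {c}) = R `` {g c}"
proof -
  have gB: "g \<in> Bij S" and gR: "\<And>x y. x \<in> S \<Longrightarrow> y \<in> S \<Longrightarrow> (x, y) \<in> R \<longleftrightarrow> (g x, g y) \<in> R"
    using g by (auto simp: SymR_def)
  have RS: "R \<subseteq> S \<times> S" using eq by (simp add: equiv_def refl_on_def)
  have "R `` {g c} \<subseteq> g ` (R `` {c})"
  proof
    fix d assume "d \<in> R `` {g c}"
    moreover obtain b where "b \<in> S" "d = g b"
      using \<open>d \<in> R `` {g c}\<close> RS gB by (auto simp: Bij_def bij_betw_def)
    ultimately show "d \<in> g ` (R `` {c})" using gR c by auto
  qed
  moreover have "g ` (R `` {c}) \<subseteq> R `` {g c}" using RS gR c by auto
  ultimately show ?thesis by blast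
qed

lemma induced_class:
  "equiv S R \<Longrightarrow> g \<in> SymR S R \<Longrightarrow> c \<in> S \<Longrightarrow> induced S R g (R `` {c}) = R `` {g c}"
  using SymR_image_class by (simp add: induced_def quotientI)

lemma induced_bij_betw:
  assumes eq: "equiv S R" and g: "g \<in> SymR S R"
  shows "bij_betw (induced S R g) (S // R) (S // R)"
proof (rule bij_betw_imageI)
  have gB: "bij_betw g S S" using g by (simp add: SymR_def Bij_def)
  show "inj_on (induced S R g) (S // R)"
  proof (rule inj_onI)
    fix A B assume "A \<in> S // R" "B \<in> S // R" "induced S R g A = induced S R g B"
    moreover have "A \<subseteq> S" "B \<subseteq> S" using calculation eq by (simp_all add: in_quotient_imp_subset)
    ultimately show "A = B" using gB by (simp add: induced_def bij_betw_def inj_on_image_eq_iff[of g S])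
  qed
  have "\<And>c. c \<in> S \<Longrightarrow> R `` {c} \<in> induced S R g ` (S // R)"
  proof -
    fix c assume "c \<in> S"
    then obtain b where "b \<in> S" "c = g b" using gB by (auto simp: bij_betw_def)
    then show "R `` {c} \<in> induced S R g ` (S // R)"
      using induced_class[OF eq g] by (auto intro: quotientI)
  qed
  moreover have "\<And>c. c \<in> S \<Longrightarrow> induced S R g (R `` {c}) \<in> S // R"
    using induced_class[OF eq g] Bij_apply[OF SymR_Bij[OF g]] by (simp add: quotientI)
  ultimately show "induced S R g ` (S // R) = S // R"
    by (auto elim!: quotientE)
qed

lemma induced_eqI:
  assumes eq: "equiv S R" and g: "g \<in> SymR S R" "g' \<in> SymR S R"
    and rel: "\<And>b. b \<in> S \<Longrightarrow> (g b, g' b) \<in> R"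
  shows "induced S R g = induced S R g'"
proof
  fix C show "induced S R g C = induced S R g' C"
  proof (cases "C \<in> S // R")
    case True
    then obtain b where "b \<in> S" "C = R `` {b}" by (auto simp: quotient_def)
    then show ?thesis
      using induced_class[OF eq g(1) \<open>b \<in> S\<close>] induced_class[OF eq g(2) \<open>b \<in> S\<close>]
        equiv_class_eq[OF eq rel[OF \<open>b \<in> S\<close>]] by simp
  qed (simp add: induced_def)
qed

lemma induced_eqD:
  assumes eq: "equiv S R" and g: "g \<in> SymR S R" "g' \<in> SymR S R"
    and ind: "induced S R g = induced S R g'" and b: "b \<in> S"
  shows "(g b, g' b) \<in> R"
proof -
  have "R `` {g b} = induced S R g (R `` {b})" by (rule induced_class[OF eq g(1) b, symmetric])
  also have "\<dots> = R `` {g' b}" unfolding ind by (rule induced_class[OF eq g(2) b])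
  finally show ?thesis
    using eq_equiv_class_iff[OF eq Bij_apply[OF SymR_Bij[OF g(1)] b] Bij_apply[OF SymR_Bij[OF g(2)] b]]
    by simp
qed

subsection \<open>Local Moufang sets\<close>

context
  fixes X :: "'a set" and R and U
  assumes lms: "local_moufang_set X R U"
begin

lemmas lms_axioms = lms[unfolded local_moufang_set_def]
lemmas lms_equiv = lms_axioms[THEN conjunct1]
lemmas lms_root_groups = lms_axioms[THEN conjunct2, THEN conjunct2, THEN conjunct1]
lemmas lms_LM0 = lms_axioms[THEN conjunct2, THEN conjunct2, THEN conjunct2, THEN conjunct1]
lemmas lms_LM1 = lms_axioms[THEN conjunct2, THEN conjunct2, THEN conjunct2, THEN conjunct2, THEN conjunct1]
lemmas lms_LM1' = lms_axioms[THEN conjunct2, THEN conjunct2, THEN conjunct2, THEN conjunct2, THEN conjunct2,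
  THEN conjunct1]
lemmas lms_LM2 = lms_axioms[THEN conjunct2, THEN conjunct2, THEN conjunct2, THEN conjunct2, THEN conjunct2,
  THEN conjunct2]

lemma lms_subgroup: "a \<in> X \<Longrightarrow> subgroup (U a) (BijGroup X)"
  using lms_root_groups by blast

lemma lms_SymR: "a \<in> X \<Longrightarrow> u \<in> U a \<Longrightarrow> u \<in> SymR X R"
  using lms_root_groups by blast

lemma lms_Bij: "a \<in> X \<Longrightarrow> u \<in> U a \<Longrightarrow> u \<in> Bij X"
  using lms_SymR SymR_Bij by blast

lemma lms_root_fixes: "a \<in> X \<Longrightarrow> u \<in> U a \<Longrightarrow> u a = a"
  using lms_LM1 by blast

lemma lms_root_unrelated:
  assumes "a \<in> X" "u \<in> U a" "c \<in> X" "(a, c) \<notin> R"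
  shows "u c \<in> X" "(a, u c) \<notin> R"
proof -
  have "u ` (X - R `` {a}) = X - R `` {a}"
    using lms_LM1 assms(1,2) by blast
  then show "u c \<in> X" "(a, u c) \<notin> R" using assms(3,4) by blast+
qed

lemma lms_root_sharply_transitive:
  "a \<in> X \<Longrightarrow> c \<in> X \<Longrightarrow> d \<in> X \<Longrightarrow> (a, c) \<notin> R \<Longrightarrow> (a, d) \<notin> R \<Longrightarrow> \<exists>!u. u \<in> U a \<and> u c = d"
  using lms_LM1 by blast

lemma lms_root_unique:
  assumes a: "a \<in> X" "u \<in> U a" "u' \<in> U a" and c: "c \<in> X" "(a, c) \<notin> R" and "u c = u' c"
  shows "u = u'"
proof -
  have "\<exists>!v. v \<in> U a \<and> v c = u c"
    using lms_root_sharply_transitive[OF a(1) c(1) lms_root_unrelated(1)[OF a(1,2) c] c(2)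
        lms_root_unrelated(2)[OF a(1,2) c]] .
  then show ?thesis using a(2,3) \<open>u c = u' c\<close> by auto
qed

lemma lms_induced_sharply_transitive:
  "a \<in> X \<Longrightarrow> C \<in> X // R - {R `` {a}} \<Longrightarrow> D \<in> X // R - {R `` {a}} \<Longrightarrow>
    \<exists>!v. v \<in> induced X R ` U a \<and> v C = D"
  by (rule bspec[OF bspec[OF conjunct2[OF bspec[OF lms_LM1']]]])

text \<open>By (LM0) the root groups of related points induce the same group on the classes, and
  there an element is determined by the image of a single class off the fixed class (LM1').\<close>
lemma lms_roots_related:
  assumes a: "a \<in> X" "a' \<in> X" "(a, a') \<in> R" and u: "u \<in> U a" "u' \<in> U a'"
    and c: "c \<in> X" "(a, c) \<notin> R" "(u c, u' c) \<in> R" and b: "b \<in> X"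
  shows "(u b, u' b) \<in> R"
proof -
  have eq: "equiv X R" by (rule lms_equiv)
  have uS: "u \<in> SymR X R" "u' \<in> SymR X R" using lms_SymR a u by auto
  have uc: "u c \<in> X" "(a, u c) \<notin> R" using lms_root_unrelated a u c by auto
  have C: "R `` {c} \<in> X // R - {R `` {a}}" and D: "R `` {u c} \<in> X // R - {R `` {a}}"
    using c uc a eq by (auto simp: quotientI eq_equiv_class_iff) (meson equiv_def symD)+
  have "\<exists>!v. v \<in> induced X R ` U a \<and> v (R `` {c}) = R `` {u c}"
    by (rule lms_induced_sharply_transitive[OF a(1) C D])
  moreover have "induced X R u' \<in> induced X R ` U a"
    using lms_LM0 a u by auto
  moreover have "induced X R u' (R `` {c}) = R `` {u c}"
    using induced_class[OF eq uS(2) c(1)] equiv_class_eq[OF eq c(3)] by simp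
  ultimately have "induced X R u = induced X R u'"
    using u(1) induced_class[OF eq uS(1) c(1)] by blast
  then show ?thesis by (rule induced_eqD[OF eq uS _ b])
qed

lemma lms_root_conj:
  assumes "a \<in> X" "g \<in> generate (BijGroup X) (\<Union>y\<in>X. U y)" "u \<in> U a"
  shows "g \<otimes>\<^bsub>BijGroup X\<^esub> u \<otimes>\<^bsub>BijGroup X\<^esub> inv\<^bsub>BijGroup X\<^esub> g \<in> U (g a)"
  using lms_LM2 assms by blast

end

subsection \<open>The inverse limit\<close>

locale inverse_limit =
  fixes I :: "'i set" and ge :: "'i \<Rightarrow> 'i \<Rightarrow> bool" and X :: "'i \<Rightarrow> 'a set"
    and R :: "'i \<Rightarrow> ('a \<times> 'a) set" and U :: "'i \<Rightarrow> 'a \<Rightarrow> ('a \<Rightarrow> 'a) set"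
    and \<phi> :: "'i \<Rightarrow> 'i \<Rightarrow> 'a \<Rightarrow> 'a"
  assumes sys: "inverse_system I ge X R U \<phi>"
begin

abbreviation "L \<equiv> lim_set I ge X \<phi>"
abbreviation "RL \<equiv> lim_rel I ge X R \<phi>"
abbreviation "UL \<equiv> lim_root_group I ge X U \<phi>"
abbreviation "P \<equiv> lim_proj I ge X \<phi>"

lemma index_nonempty: "I \<noteq> {}"
  using sys by (simp add: inverse_system_def directed_set_def)

lemma ex_upper_bound: "i \<in> I \<Longrightarrow> j \<in> I \<Longrightarrow> \<exists>k\<in>I. ge k i \<and> ge k j"
  using sys unfolding inverse_system_def directed_set_def by blast

lemma local_moufang_set_component: "i \<in> I \<Longrightarrow> local_moufang_set (X i) (R i) (U i)"
  using sys by (simp add: inverse_system_def)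

lemma bonding_hom: "i \<in> I \<Longrightarrow> j \<in> I \<Longrightarrow> ge i j \<Longrightarrow> lms_hom (X i) (R i) (U i) (X j) (R j) (U j) (\<phi> i j)"
  using sys by (simp add: inverse_system_def)

lemma bonding_in: "i \<in> I \<Longrightarrow> j \<in> I \<Longrightarrow> ge i j \<Longrightarrow> z \<in> X i \<Longrightarrow> \<phi> i j z \<in> X j"
  using bonding_hom unfolding lms_hom_def by blast

lemma bonding_related_iff: "i \<in> I \<Longrightarrow> j \<in> I \<Longrightarrow> ge i j \<Longrightarrow> a \<in> X i \<Longrightarrow> b \<in> X i \<Longrightarrow>
    (a, b) \<in> R i \<longleftrightarrow> (\<phi> i j a, \<phi> i j b) \<in> R j"
  using bonding_hom unfolding lms_hom_def by blast

lemma bonding_root: "i \<in> I \<Longrightarrow> j \<in> I \<Longrightarrow> ge i j \<Longrightarrow> a \<in> X i \<Longrightarrow> u \<in> U i a \<Longrightarrow>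
    \<exists>v\<in>U j (\<phi> i j a). \<forall>y\<in>X i. \<phi> i j (u y) = v (\<phi> i j y)"
  using bonding_hom unfolding lms_hom_def by blast

lemma lim_set_in: "x \<in> L \<Longrightarrow> i \<in> I \<Longrightarrow> x i \<in> X i"
  by (auto simp: lim_set_def)

lemma lim_set_bonding: "x \<in> L \<Longrightarrow> i \<in> I \<Longrightarrow> j \<in> I \<Longrightarrow> ge i j \<Longrightarrow> \<phi> i j (x i) = x j"
  by (auto simp: lim_set_def)

lemma lim_setI: "x \<in> extensional I \<Longrightarrow> (\<And>i. i \<in> I \<Longrightarrow> x i \<in> X i) \<Longrightarrow>
    (\<And>i j. i \<in> I \<Longrightarrow> j \<in> I \<Longrightarrow> ge i j \<Longrightarrow> \<phi> i j (x i) = x j) \<Longrightarrow> x \<in> L"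
  by (auto simp: lim_set_def PiE_def)

lemma lim_set_eqI: "x \<in> L \<Longrightarrow> y \<in> L \<Longrightarrow> (\<And>i. i \<in> I \<Longrightarrow> x i = y i) \<Longrightarrow> x = y"
  by (auto simp: lim_set_def PiE_def intro: extensionalityI[of _ I])

text \<open>Pass through a common upper bound, where both relations are pulled back along the bonding maps.\<close>
lemma lim_set_related_transfer:
  assumes x: "x \<in> L" and y: "y \<in> L" and i: "i \<in> I" "(x i, y i) \<in> R i" and j: "j \<in> I"
  shows "(x j, y j) \<in> R j"
proof -
  obtain k where k: "k \<in> I" "ge k i" "ge k j" using ex_upper_bound[OF i(1) j] by blast
  have "(x k, y k) \<in> R k"
    using bonding_related_iff[OF k(1) i(1) k(2) lim_set_in[OF x k(1)] lim_set_in[OF y k(1)]] i(2)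
    by (simp add: lim_set_bonding[OF x k(1) i(1) k(2)] lim_set_bonding[OF y k(1) i(1) k(2)])
  then show ?thesis
    using bonding_related_iff[OF k(1) j k(3) lim_set_in[OF x k(1)] lim_set_in[OF y k(1)]]
    by (simp add: lim_set_bonding[OF x k(1) j k(3)] lim_set_bonding[OF y k(1) j k(3)])
qed

lemma lim_set_related_ex_iff_all:
  "x \<in> L \<Longrightarrow> y \<in> L \<Longrightarrow> (\<exists>i\<in>I. (x i, y i) \<in> R i) \<longleftrightarrow> (\<forall>i\<in>I. (x i, y i) \<in> R i)"
  using lim_set_related_transfer index_nonempty by blast

lemma lim_rel_iff: "(x, y) \<in> RL \<longleftrightarrow> x \<in> L \<and> y \<in> L \<and> (\<forall>i\<in>I. (x i, y i) \<in> R i)"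
  unfolding lim_rel_def using lim_set_related_ex_iff_all by blast

lemma lim_unrelated_component: "x \<in> L \<Longrightarrow> z \<in> L \<Longrightarrow> (x, z) \<notin> RL \<Longrightarrow> i \<in> I \<Longrightarrow> (x i, z i) \<notin> R i"
  using lim_rel_iff lim_set_related_transfer by blast

lemma equiv_lim_rel: "equiv L RL"
proof (rule equivI)
  have eq: "\<And>i. i \<in> I \<Longrightarrow> equiv (X i) (R i)"
    using lms_equiv[OF local_moufang_set_component] .
  show "RL \<subseteq> L \<times> L" by (auto simp: lim_rel_iff)
  show "refl_on L RL"
    using eq lim_set_in by (auto simp: refl_on_def lim_rel_iff equiv_def)
  show "sym RL"
    using eq by (auto simp: sym_def lim_rel_iff equiv_def)
  show "trans RL"
    using eq by (auto simp: trans_def lim_rel_iff equiv_def)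
qed

lemma lim_rel_refl: "x \<in> L \<Longrightarrow> (x, x) \<in> RL"
  using equiv_lim_rel by (auto simp: equiv_def dest: refl_onD)

lemma lim_rel_sym: "(x, y) \<in> RL \<Longrightarrow> (y, x) \<in> RL"
  using equiv_lim_rel by (auto simp: equiv_def dest: symD)

subsection \<open>Compatible families of permutations\<close>

abbreviation "Perm \<equiv> product_group I (\<lambda>i. BijGroup (X i))"

sublocale Perm: group Perm
  by (simp add: group_BijGroup)

lemma Perm_inv_apply: "u \<in> carrier Perm \<Longrightarrow> i \<in> I \<Longrightarrow> (inv\<^bsub>Perm\<^esub> u) i = inv\<^bsub>BijGroup (X i)\<^esub> (u i)"
  by (simp add: group_BijGroup)

definition compatible_family :: "('i \<Rightarrow> 'a \<Rightarrow> 'a) \<Rightarrow> bool" where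
  "compatible_family u \<longleftrightarrow> (\<forall>i\<in>I. \<forall>j\<in>I. ge i j \<longrightarrow> (\<forall>z\<in>X i. \<phi> i j (u i z) = u j (\<phi> i j z)))"

definition compatible_perms :: "('i \<Rightarrow> 'a \<Rightarrow> 'a) set" where
  "compatible_perms = {u \<in> carrier Perm. compatible_family u}"

lemma compatible_familyD:
  "compatible_family u \<Longrightarrow> i \<in> I \<Longrightarrow> j \<in> I \<Longrightarrow> ge i j \<Longrightarrow> z \<in> X i \<Longrightarrow> \<phi> i j (u i z) = u j (\<phi> i j z)"
  by (simp add: compatible_family_def)

lemma compatible_perms_Bij: "u \<in> compatible_perms \<Longrightarrow> i \<in> I \<Longrightarrow> u i \<in> Bij (X i)"
  by (auto simp: compatible_perms_def)

lemma subgroup_compatible_perms: "subgroup compatible_perms Perm"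
proof (rule Perm.subgroupI)
  show "compatible_perms \<subseteq> carrier Perm" by (auto simp: compatible_perms_def)
  have "\<one>\<^bsub>Perm\<^esub> \<in> compatible_perms"
    using bonding_in Perm.one_closed
    by (auto simp: compatible_perms_def compatible_family_def)
  then show "compatible_perms \<noteq> {}" by blast
next
  fix u v assume u: "u \<in> compatible_perms" and v: "v \<in> compatible_perms"
  have uv: "u \<otimes>\<^bsub>Perm\<^esub> v \<in> carrier Perm"
    using u v unfolding compatible_perms_def by (blast intro: Perm.m_closed)
  have "compatible_family (u \<otimes>\<^bsub>Perm\<^esub> v)" unfolding compatible_family_def
  proof (intro ballI impI)
    fix i j z assume ij: "i \<in> I" "j \<in> I" "ge i j" and z: "z \<in> X i"
    have "v i z \<in> X i" using Bij_apply[OF compatible_perms_Bij[OF v ij(1)] z] .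
    then show "\<phi> i j ((u \<otimes>\<^bsub>Perm\<^esub> v) i z) = (u \<otimes>\<^bsub>Perm\<^esub> v) j (\<phi> i j z)"
      using u v ij z bonding_in[OF ij z] compatible_perms_Bij[OF u] compatible_perms_Bij[OF v]
      by (simp add: BijGroup_mult_apply compatible_perms_def compatible_familyD)
  qed
  then show "u \<otimes>\<^bsub>Perm\<^esub> v \<in> compatible_perms" using uv by (simp add: compatible_perms_def)
next
  fix u assume u: "u \<in> compatible_perms"
  have "compatible_family (inv\<^bsub>Perm\<^esub> u)" unfolding compatible_family_def
  proof (intro ballI impI)
    fix i j z assume ij: "i \<in> I" "j \<in> I" "ge i j" and z: "z \<in> X i"
    have uB: "u i \<in> Bij (X i)" "u j \<in> Bij (X j)" using compatible_perms_Bij u ij by auto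
    let ?a = "(inv\<^bsub>BijGroup (X i)\<^esub> u i) z"
    have a: "?a \<in> X i" "u i ?a = z"
      using BijGroup_inv_apply(1,3)[OF uB(1) z] by auto
    have "\<phi> i j z = u j (\<phi> i j ?a)"
      using compatible_familyD[of u, OF _ ij a(1)] u a(2) by (simp add: compatible_perms_def)
    then have "(inv\<^bsub>BijGroup (X j)\<^esub> u j) (\<phi> i j z) = \<phi> i j ?a"
      using BijGroup_inv_apply(2)[OF uB(2) bonding_in[OF ij a(1)]] by simp
    then show "\<phi> i j ((inv\<^bsub>Perm\<^esub> u) i z) = (inv\<^bsub>Perm\<^esub> u) j (\<phi> i j z)"
      using u ij by (simp add: Perm_inv_apply compatible_perms_def)
  qed
  then show "inv\<^bsub>Perm\<^esub> u \<in> compatible_perms"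
    using u Perm.inv_closed unfolding compatible_perms_def by blast
qed

definition act :: "('i \<Rightarrow> 'a \<Rightarrow> 'a) \<Rightarrow> ('i \<Rightarrow> 'a) \<Rightarrow> ('i \<Rightarrow> 'a)" where
  "act u = (\<lambda>y\<in>L. \<lambda>i\<in>I. u i (y i))"

abbreviation "CPerm \<equiv> Perm\<lparr>carrier := compatible_perms\<rparr>"

lemma act_apply: "y \<in> L \<Longrightarrow> i \<in> I \<Longrightarrow> act u y i = u i (y i)"
  by (simp add: act_def)

lemma act_closed: assumes u: "u \<in> compatible_perms" and y: "y \<in> L" shows "act u y \<in> L"
proof (rule lim_setI)
  show "act u y \<in> extensional I" using y by (simp add: act_def)
  show "\<And>i. i \<in> I \<Longrightarrow> act u y i \<in> X i"
    using Bij_apply[OF compatible_perms_Bij[OF u] lim_set_in[OF y]] y by (simp add: act_apply)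
  fix i j assume ij: "i \<in> I" "j \<in> I" "ge i j"
  show "\<phi> i j (act u y i) = act u y j"
    using u compatible_familyD[OF _ ij lim_set_in[OF y ij(1)]] lim_set_bonding[OF y ij] y ij
    by (simp add: act_apply compatible_perms_def)
qed

lemma act_mult:
  assumes u: "u \<in> compatible_perms" and v: "v \<in> compatible_perms" and y: "y \<in> L"
  shows "act (u \<otimes>\<^bsub>Perm\<^esub> v) y = act u (act v y)"
proof (rule lim_set_eqI)
  show "act (u \<otimes>\<^bsub>Perm\<^esub> v) y \<in> L"
    using u v y subgroup.m_closed[OF subgroup_compatible_perms] act_closed by blast
  show "act u (act v y) \<in> L" using u v y act_closed by blast
  fix i assume i: "i \<in> I"
  show "act (u \<otimes>\<^bsub>Perm\<^esub> v) y i = act u (act v y) i"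
    using i y act_closed[OF v y] compatible_perms_Bij[OF u i] compatible_perms_Bij[OF v i] lim_set_in[OF y i]
    by (simp add: act_apply BijGroup_mult_apply)
qed

lemma act_one: assumes y: "y \<in> L" shows "act \<one>\<^bsub>Perm\<^esub> y = y"
proof (rule lim_set_eqI[OF _ y])
  show "act \<one>\<^bsub>Perm\<^esub> y \<in> L" by (rule act_closed[OF subgroup.one_closed[OF subgroup_compatible_perms] y])
qed (simp add: act_apply y lim_set_in)

lemma act_Bij: assumes u: "u \<in> compatible_perms" shows "act u \<in> Bij L"
proof -
  have u': "inv\<^bsub>Perm\<^esub> u \<in> compatible_perms" using subgroup.m_inv_closed[OF subgroup_compatible_perms u] .
  have uP: "u \<in> carrier Perm" using subgroup.mem_carrier[OF subgroup_compatible_perms u] .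
  have "bij_betw (act u) L L"
  proof (rule bij_betwI[where g = "act (inv\<^bsub>Perm\<^esub> u)"])
    show "act u \<in> L \<rightarrow> L" "act (inv\<^bsub>Perm\<^esub> u) \<in> L \<rightarrow> L" using act_closed u u' by auto
    fix y assume y: "y \<in> L"
    show "act (inv\<^bsub>Perm\<^esub> u) (act u y) = y" "act u (act (inv\<^bsub>Perm\<^esub> u) y) = y"
      using act_mult[OF u' u y] act_mult[OF u u' y] act_one[OF y] Perm.l_inv[OF uP] Perm.r_inv[OF uP]
      by metis+
  qed
  then show ?thesis by (simp add: Bij_def act_def)
qed

lemma group_hom_act: "group_hom CPerm (BijGroup L) act"
proof (rule group_hom.intro)
  show "group CPerm" by (rule Perm.subgroup_imp_group[OF subgroup_compatible_perms])
  show "group (BijGroup L)" by (rule group_BijGroup)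
  show "group_hom_axioms CPerm (BijGroup L) act"
  proof (unfold_locales, rule homI)
    fix u v assume u: "u \<in> carrier CPerm" and v: "v \<in> carrier CPerm"
    show "act u \<in> carrier (BijGroup L)" using act_Bij u by simp
    show "act (u \<otimes>\<^bsub>CPerm\<^esub> v) = act u \<otimes>\<^bsub>BijGroup L\<^esub> act v"
    proof
      fix y show "act (u \<otimes>\<^bsub>CPerm\<^esub> v) y = (act u \<otimes>\<^bsub>BijGroup L\<^esub> act v) y"
        using u v act_mult[of u v y] act_Bij
        by (cases "y \<in> L") (simp_all add: BijGroup_mult compose_def, simp add: act_def)
    qed
  qed
qed

definition root_families :: "('i \<Rightarrow> 'a) \<Rightarrow> ('i \<Rightarrow> 'a \<Rightarrow> 'a) set" where
  "root_families x = {u \<in> (\<Pi>\<^sub>E i\<in>I. U i (x i)). compatible_family u}"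

lemma lim_root_group_eq: "UL x = act ` root_families x"
  unfolding lim_root_group_def act_def root_families_def compatible_family_def by blast

lemma root_familiesD: "u \<in> root_families x \<Longrightarrow> i \<in> I \<Longrightarrow> u i \<in> U i (x i)"
  by (auto simp: root_families_def)

lemma root_families_eq:
  "x \<in> L \<Longrightarrow> root_families x = compatible_perms \<inter> (\<Pi>\<^sub>E i\<in>I. U i (x i))"
  using lms_Bij[OF local_moufang_set_component lim_set_in]
  by (auto simp: root_families_def compatible_perms_def)

lemma root_families_compatible_perms: "x \<in> L \<Longrightarrow> u \<in> root_families x \<Longrightarrow> u \<in> compatible_perms"
  using root_families_eq by blast

lemma subgroup_root_families: assumes x: "x \<in> L" shows "subgroup (root_families x) Perm"
proof -
  have "subgroup (\<Pi>\<^sub>E i\<in>I. U i (x i)) Perm"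
    using lms_subgroup[OF local_moufang_set_component lim_set_in[OF x]]
    by (simp add: PiE_subgroup_product_group group_BijGroup)
  then show ?thesis
    unfolding root_families_eq[OF x] by (rule Perm.subgroups_Inter_pair[OF subgroup_compatible_perms])
qed

lemma subgroup_lim_root_group: "x \<in> L \<Longrightarrow> subgroup (UL x) (BijGroup L)"
  unfolding lim_root_group_eq
  by (rule group_hom.subgroup_img_is_subgroup[OF group_hom_act], rule Perm.subgroup_incl)
     (auto intro: subgroup_root_families subgroup_compatible_perms root_families_compatible_perms)

lemma lim_root_SymR:
  assumes x: "x \<in> L" and u: "u \<in> root_families x"
  shows "act u \<in> SymR L RL"
  unfolding SymR_def
proof (intro CollectI conjI ballI)
  have uC: "u \<in> compatible_perms" by (rule root_families_compatible_perms[OF x u])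
  show "act u \<in> Bij L" by (rule act_Bij[OF uC])
  fix y z assume y: "y \<in> L" and z: "z \<in> L"
  have "\<forall>i\<in>I. (y i, z i) \<in> R i \<longleftrightarrow> (u i (y i), u i (z i)) \<in> R i"
    using lms_SymR[OF local_moufang_set_component lim_set_in[OF x] root_familiesD[OF u]]
      lim_set_in[OF y] lim_set_in[OF z] by (simp add: SymR_def)
  then show "(y, z) \<in> RL \<longleftrightarrow> (act u y, act u z) \<in> RL"
    using y z act_closed[OF uC y] act_closed[OF uC z] by (simp add: lim_rel_iff act_apply)
qed

lemma lim_root_fixes: "x \<in> L \<Longrightarrow> u \<in> root_families x \<Longrightarrow> act u x = x"
  by (rule lim_set_eqI[OF act_closed[OF root_families_compatible_perms]])
     (simp_all add: act_apply lms_root_fixes[OF local_moufang_set_component lim_set_in root_familiesD])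

lemma lim_root_unique:
  assumes x: "x \<in> L" and z: "z \<in> L" "(x, z) \<notin> RL"
    and u: "u \<in> root_families x" and w: "w \<in> root_families x" and e: "act u z = act w z"
  shows "u = w"
proof (rule extensionalityI[of _ I])
  show "u \<in> extensional I" "w \<in> extensional I" using u w by (auto simp: root_families_def PiE_def)
  fix i assume i: "i \<in> I"
  have "u i (z i) = w i (z i)" using arg_cong[OF e, of "\<lambda>y. y i"] by (simp add: act_apply z(1) i)
  then show "u i = w i"
    using lms_root_unique[OF local_moufang_set_component[OF i] lim_set_in[OF x i]
        root_familiesD[OF u i] root_familiesD[OF w i] lim_set_in[OF z(1) i]
        lim_unrelated_component[OF x z i]] by simp
qed

lemma compatible_root_family:
  assumes x: "x \<in> L" and c: "c \<in> L" "(x, c) \<notin> RL" and w: "\<And>i. i \<in> I \<Longrightarrow> w i \<in> U i (x i)"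
    and wc: "\<And>i j. i \<in> I \<Longrightarrow> j \<in> I \<Longrightarrow> ge i j \<Longrightarrow> \<phi> i j (w i (c i)) = w j (c j)"
  shows "compatible_family w"
  unfolding compatible_family_def
proof (intro ballI impI)
  fix i j z assume ij: "i \<in> I" "j \<in> I" "ge i j" and z: "z \<in> X i"
  obtain v where v: "v \<in> U j (\<phi> i j (x i))" "\<forall>b\<in>X i. \<phi> i j (w i b) = v (\<phi> i j b)"
    using bonding_root[OF ij lim_set_in[OF x ij(1)] w[OF ij(1)]] by blast
  have "v (c j) = v (\<phi> i j (c i))" by (simp add: lim_set_bonding[OF c(1) ij])
  also have "\<dots> = \<phi> i j (w i (c i))" using bspec[OF v(2) lim_set_in[OF c(1) ij(1)]] by (rule sym)
  also have "\<dots> = w j (c j)" by (rule wc[OF ij])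
  finally have "v (c j) = w j (c j)" .
  moreover have "v \<in> U j (x j)" using v(1) by (simp add: lim_set_bonding[OF x ij])
  ultimately have "v = w j"
    using lms_root_unique[OF local_moufang_set_component[OF ij(2)] lim_set_in[OF x ij(2)] _ w[OF ij(2)]
        lim_set_in[OF c(1) ij(2)] lim_unrelated_component[OF x c ij(2)]] by blast
  then show "\<phi> i j (w i z) = w j (\<phi> i j z)" using v(2) z by simp
qed

lemma lim_root_exists:
  assumes x: "x \<in> L" and y: "y \<in> L" "(x, y) \<notin> RL" and z: "z \<in> L" "(x, z) \<notin> RL"
  shows "\<exists>u\<in>root_families x. act u y = z"
proof -
  have "\<forall>i\<in>I. \<exists>v. v \<in> U i (x i) \<and> v (y i) = z i"
    using lms_root_sharply_transitive[OF local_moufang_set_component lim_set_in[OF x] lim_set_in[OF y(1)]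
        lim_set_in[OF z(1)] lim_unrelated_component[OF x y] lim_unrelated_component[OF x z]]
    by blast
  then obtain w where w: "\<And>i. i \<in> I \<Longrightarrow> w i \<in> U i (x i) \<and> w i (y i) = z i" by metis
  have "compatible_family (restrict w I)"
    using compatible_root_family[OF x y, of "restrict w I"] w lim_set_bonding[OF z(1)] by simp
  then have wR: "restrict w I \<in> root_families x" using w by (simp add: root_families_def)
  moreover have "act (restrict w I) y = z"
    by (rule lim_set_eqI[OF act_closed[OF root_families_compatible_perms[OF x wR] y(1)] z(1)])
       (simp add: act_apply y(1) w)
  ultimately show ?thesis by blast
qed

lemma lim_roots_induced_eq:
  assumes x: "x \<in> L" "x' \<in> L" "(x, x') \<in> RL" and u: "u \<in> root_families x" "u' \<in> root_families x'"
    and c: "c \<in> L" "(x, c) \<notin> RL" "(act u c, act u' c) \<in> RL"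
  shows "induced L RL (act u) = induced L RL (act u')"
proof (rule induced_eqI[OF equiv_lim_rel lim_root_SymR[OF x(1) u(1)] lim_root_SymR[OF x(2) u(2)]])
  fix b assume b: "b \<in> L"
  have uC: "u \<in> compatible_perms" "u' \<in> compatible_perms"
    using root_families_compatible_perms x u by auto
  have "\<forall>i\<in>I. (u i (b i), u' i (b i)) \<in> R i"
  proof
    fix i assume i: "i \<in> I"
    have "(u i (c i), u' i (c i)) \<in> R i"
      using c(3) i by (simp add: lim_rel_iff act_apply c(1))
    then show "(u i (b i), u' i (b i)) \<in> R i"
      using lms_roots_related[OF local_moufang_set_component[OF i] lim_set_in[OF x(1) i]
          lim_set_in[OF x(2) i] _ root_familiesD[OF u(1) i] root_familiesD[OF u(2) i]
          lim_set_in[OF c(1) i] lim_unrelated_component[OF x(1) c(1,2) i] _ lim_set_in[OF b i]]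
        x(3) i by (simp add: lim_rel_iff)
  qed
  then show "(act u b, act u' b) \<in> RL"
    using act_closed[OF uC(1) b] act_closed[OF uC(2) b] by (simp add: lim_rel_iff act_apply b)
qed

lemma lim_root_class_complement:
  assumes x: "x \<in> L" and u: "u \<in> root_families x"
  shows "act u ` (L - RL `` {x}) = L - RL `` {x}"
proof (rule bij_betw_image_Diff)
  show "bij_betw (act u) L L"
    using act_Bij[OF root_families_compatible_perms[OF x u]] by (simp add: Bij_def)
  show "RL `` {x} \<subseteq> L" by (auto simp: lim_rel_iff)
  show "act u ` (RL `` {x}) = RL `` {x}"
    using SymR_image_class[OF equiv_lim_rel lim_root_SymR[OF x u] x] lim_root_fixes[OF x u] by simp
qed

lemma lim_root_group_sharply_transitive:
  assumes x: "x \<in> L" and y: "y \<in> L - RL `` {x}" and z: "z \<in> L - RL `` {x}"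
  shows "\<exists>!u. u \<in> UL x \<and> u y = z"
proof -
  have y': "y \<in> L" "(x, y) \<notin> RL" and z': "z \<in> L" "(x, z) \<notin> RL" using y z by auto
  obtain w where w: "w \<in> root_families x" "act w y = z" using lim_root_exists[OF x y' z'] by blast
  show ?thesis
  proof (rule ex1I[of _ "act w"])
    show "act w \<in> UL x \<and> act w y = z" using w by (simp add: lim_root_group_eq)
    fix u assume "u \<in> UL x \<and> u y = z"
    then obtain w' where "w' \<in> root_families x" "u = act w'" "act w' y = z"
      by (auto simp: lim_root_group_eq)
    then show "u = act w" using lim_root_unique[OF x y' _ w(1)] w(2) by simp
  qed
qed

lemma lim_induced_root_fixes:
  assumes x: "x \<in> L" and u: "u \<in> root_families x"
  shows "induced L RL (act u) (RL `` {x}) = RL `` {x}"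
    and "induced L RL (act u) ` (L // RL - {RL `` {x}}) = L // RL - {RL `` {x}}"
proof -
  show fixed: "induced L RL (act u) (RL `` {x}) = RL `` {x}"
    using induced_class[OF equiv_lim_rel lim_root_SymR[OF x u] x] lim_root_fixes[OF x u] by simp
  show "induced L RL (act u) ` (L // RL - {RL `` {x}}) = L // RL - {RL `` {x}}"
    by (rule bij_betw_image_Diff[OF induced_bij_betw[OF equiv_lim_rel lim_root_SymR[OF x u]]])
       (use fixed x in \<open>auto intro: quotientI\<close>)
qed

lemma lim_induced_sharply_transitive:
  assumes x: "x \<in> L" and C: "C \<in> L // RL - {RL `` {x}}" and D: "D \<in> L // RL - {RL `` {x}}"
  shows "\<exists>!v. v \<in> induced L RL ` UL x \<and> v C = D"
proof -
  obtain c where c: "c \<in> L" "C = RL `` {c}" using C by (auto elim: quotientE)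
  obtain d where d: "d \<in> L" "D = RL `` {d}" using D by (auto elim: quotientE)
  have xc: "(x, c) \<notin> RL" and xd: "(x, d) \<notin> RL"
    using C c D d equiv_class_eq[OF equiv_lim_rel] by auto
  obtain u where u: "u \<in> root_families x" "act u c = d" using lim_root_exists[OF x c(1) xc d(1) xd] by blast
  have induced_maps: "\<And>u'. u' \<in> root_families x \<Longrightarrow> induced L RL (act u') C = RL `` {act u' c}"
    using induced_class[OF equiv_lim_rel lim_root_SymR[OF x] c(1)] c(2) by simp
  show ?thesis
  proof (rule ex1I[of _ "induced L RL (act u)"])
    show "induced L RL (act u) \<in> induced L RL ` UL x \<and> induced L RL (act u) C = D"
      using u induced_maps d(2) by (simp add: lim_root_group_eq)
    fix v assume "v \<in> induced L RL ` UL x \<and> v C = D"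
    then obtain u' where u': "u' \<in> root_families x" "v = induced L RL (act u')" "RL `` {act u' c} = D"
      using induced_maps by (auto simp: lim_root_group_eq)
    have "RL `` {act u' c} = RL `` {act u c}" using u'(3) u(2) d(2) by simp
    then have "(act u' c, act u c) \<in> RL"
      using eq_equiv_class_iff[OF equiv_lim_rel act_closed act_closed]
        root_families_compatible_perms[OF x] u'(1) u(1) c(1) by simp
    then show "v = induced L RL (act u)"
      using lim_roots_induced_eq[OF x x lim_rel_refl[OF x] u'(1) u(1) c(1) xc] u'(2) by simp
  qed
qed

lemma lim_induced_root_group_subset:
  assumes mt: "more_than_two (L // RL)" and x: "x \<in> L" and y: "y \<in> L" and xy: "(x, y) \<in> RL"
  shows "induced L RL ` UL x \<subseteq> induced L RL ` UL y"
proof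
  fix v assume "v \<in> induced L RL ` UL x"
  then obtain u where u: "u \<in> root_families x" and v: "v = induced L RL (act u)"
    by (auto simp: lim_root_group_eq)
  obtain z where z: "z \<in> L" "(x, z) \<notin> RL"
    using quotient_more_than_two_ex_unrelated[OF equiv_lim_rel mt x] by blast
  have uz: "act u z \<in> L" "(x, act u z) \<notin> RL" using lim_root_class_complement[OF x u] z by blast+
  have yz: "(y, z) \<notin> RL" "(y, act u z) \<notin> RL"
    using z(2) uz(2) xy equiv_lim_rel by (meson equiv_def transD)+
  obtain u' where u': "u' \<in> root_families y" "act u' z = act u z"
    using lim_root_exists[OF y z(1) yz(1) uz(1) yz(2)] by blast
  have "(act u z, act u' z) \<in> RL" using lim_rel_refl[OF uz(1)] u'(2) by simp
  then have "v = induced L RL (act u')"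
    using lim_roots_induced_eq[OF x y xy u u'(1) z] v by simp
  then show "v \<in> induced L RL ` UL y" using u'(1) by (simp add: lim_root_group_eq)
qed

abbreviation "root_generated i \<equiv> generate (BijGroup (X i)) (\<Union>a\<in>X i. U i a)"

definition generated_families :: "('i \<Rightarrow> 'a \<Rightarrow> 'a) set" where
  "generated_families = compatible_perms \<inter> (\<Pi>\<^sub>E i\<in>I. root_generated i)"

lemma subgroup_generated_families: "subgroup generated_families Perm"
proof -
  have "subgroup (root_generated i) (BijGroup (X i))" if "i \<in> I" for i
    using lms_Bij[OF local_moufang_set_component[OF that]]
    by (intro group.generate_is_subgroup[OF group_BijGroup]) auto
  then have "subgroup (\<Pi>\<^sub>E i\<in>I. root_generated i) Perm"
    by (simp add: PiE_subgroup_product_group group_BijGroup)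
  then show ?thesis
    unfolding generated_families_def by (rule Perm.subgroups_Inter_pair[OF subgroup_compatible_perms])
qed

lemma generate_lim_root_groups:
  assumes g: "g \<in> generate (BijGroup L) (\<Union>y\<in>L. UL y)"
  shows "g \<in> act ` generated_families"
proof -
  let ?K = "\<Union>y\<in>L. root_families y"
  have K: "?K \<subseteq> compatible_perms" using root_families_compatible_perms by blast
  have "?K \<subseteq> generated_families"
  proof
    fix u assume "u \<in> ?K"
    then obtain y where y: "y \<in> L" and u: "u \<in> root_families y" by blast
    have "u i \<in> root_generated i" if "i \<in> I" for i
      using root_familiesD[OF u that] lim_set_in[OF y that] by (blast intro: generate.incl)
    then show "u \<in> generated_families"
      using u root_families_compatible_perms[OF y u] by (auto simp: generated_families_def root_families_def)
  qed
  then have gen: "generate Perm ?K \<subseteq> generated_families"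
    by (rule Perm.generate_subgroup_incl[OF _ subgroup_generated_families])
  have "(\<Union>y\<in>L. UL y) = act ` ?K" by (auto simp: lim_root_group_eq)
  then have "g \<in> generate (BijGroup L) (act ` ?K)" using g by simp
  also have "generate (BijGroup L) (act ` ?K) = act ` generate CPerm ?K"
    using K by (intro group_hom.generate_img[OF group_hom_act, of ?K]) simp
  also have "generate CPerm ?K = generate Perm ?K"
    by (rule Perm.generate_consistent[OF K subgroup_compatible_perms])
  finally show ?thesis using gen by blast
qed

lemma lim_root_group_conj:
  assumes h: "h \<in> generated_families" and x: "x \<in> L" and v: "v \<in> UL x"
  shows "act h \<otimes>\<^bsub>BijGroup L\<^esub> v \<otimes>\<^bsub>BijGroup L\<^esub> inv\<^bsub>BijGroup L\<^esub> (act h) \<in> UL (act h x)"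
proof -
  interpret CP: subgroup compatible_perms Perm by (rule subgroup_compatible_perms)
  interpret act: group_hom CPerm "BijGroup L" act by (rule group_hom_act)
  obtain w where w: "w \<in> root_families x" "v = act w" using v by (auto simp: lim_root_group_eq)
  have hC: "h \<in> compatible_perms" and hG: "\<And>i. i \<in> I \<Longrightarrow> h i \<in> root_generated i"
    using h by (auto simp: generated_families_def)
  have wC: "w \<in> compatible_perms" by (rule root_families_compatible_perms[OF x w(1)])
  let ?w = "h \<otimes>\<^bsub>Perm\<^esub> w \<otimes>\<^bsub>Perm\<^esub> inv\<^bsub>Perm\<^esub> h"
  have "act ?w = act h \<otimes>\<^bsub>BijGroup L\<^esub> v \<otimes>\<^bsub>BijGroup L\<^esub> inv\<^bsub>BijGroup L\<^esub> (act h)"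
    using act.hom_mult[of "h \<otimes>\<^bsub>Perm\<^esub> w" "inv\<^bsub>Perm\<^esub> h"] act.hom_mult[of h w] act.hom_inv[of h]
      hC wC w(2) Perm.m_inv_consistent[OF subgroup_compatible_perms hC] CP.m_closed CP.m_inv_closed
    by (simp del: mult_product_group)
  moreover have "?w \<in> root_families (act h x)"
    unfolding root_families_def
  proof (intro CollectI conjI PiE_I)
    have "?w \<in> compatible_perms" using hC wC by (blast intro: CP.m_closed CP.m_inv_closed)
    then show "compatible_family ?w" by (simp add: compatible_perms_def)
    show "?w i = undefined" if "i \<notin> I" for i using that by simp
    fix i assume i: "i \<in> I"
    have "?w i = h i \<otimes>\<^bsub>BijGroup (X i)\<^esub> w i \<otimes>\<^bsub>BijGroup (X i)\<^esub> inv\<^bsub>BijGroup (X i)\<^esub> h i"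
      using i CP.mem_carrier[OF hC] CP.mem_carrier[OF wC] by (simp add: group_BijGroup)
    also have "\<dots> \<in> U i (h i (x i))"
      by (rule lms_root_conj[OF local_moufang_set_component[OF i] lim_set_in[OF x i] hG[OF i]
            root_familiesD[OF w(1) i]])
    finally show "?w i \<in> U i (act h x i)" by (simp add: act_apply x i)
  qed
  ultimately show ?thesis by (metis lim_root_group_eq image_eqI)
qed

text \<open>The reverse inclusion is the forward one for the conjugation by the inverse family.\<close>
lemma lim_root_group_conj_eq:
  assumes x: "x \<in> L" and g: "g \<in> generate (BijGroup L) (\<Union>y\<in>L. UL y)"
  shows "(\<lambda>u. g \<otimes>\<^bsub>BijGroup L\<^esub> u \<otimes>\<^bsub>BijGroup L\<^esub> inv\<^bsub>BijGroup L\<^esub> g) ` UL x = UL (g x)"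
proof -
  interpret B: group "BijGroup L" by (rule group_BijGroup)
  interpret act: group_hom CPerm "BijGroup L" act by (rule group_hom_act)
  interpret GF: subgroup generated_families Perm by (rule subgroup_generated_families)
  obtain h where h: "h \<in> generated_families" "g = act h" using generate_lim_root_groups[OF g] by blast
  have hC: "h \<in> compatible_perms" using h(1) by (simp add: generated_families_def)
  have gB: "g \<in> Bij L" using act_Bij[OF hC] h(2) by simp
  have h': "inv\<^bsub>Perm\<^esub> h \<in> generated_families" "act (inv\<^bsub>Perm\<^esub> h) = inv\<^bsub>BijGroup L\<^esub> g"
    using h hC GF.m_inv_closed act.hom_inv[of h] Perm.m_inv_consistent[OF subgroup_compatible_perms]
    by auto
  show ?thesis
  proof (rule equalityI[OF _ subsetI])
    show "(\<lambda>u. g \<otimes>\<^bsub>BijGroup L\<^esub> u \<otimes>\<^bsub>BijGroup L\<^esub> inv\<^bsub>BijGroup L\<^esub> g) ` UL x \<subseteq> UL (g x)"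
      using lim_root_group_conj[OF h(1) x] h(2) by blast
  next
    fix v assume v: "v \<in> UL (g x)"
    have gx: "g x \<in> L" using Bij_apply[OF gB x] .
    have vB: "v \<in> Bij L" using v subgroup.mem_carrier[OF subgroup_lim_root_group[OF gx]] by simp
    have "inv\<^bsub>BijGroup L\<^esub> g \<otimes>\<^bsub>BijGroup L\<^esub> v \<otimes>\<^bsub>BijGroup L\<^esub> g \<in> UL x"
      using lim_root_group_conj[OF h'(1) gx v] h'(2) BijGroup_inv_apply(2)[OF gB x] gB by simp
    moreover have "v = g \<otimes>\<^bsub>BijGroup L\<^esub> (inv\<^bsub>BijGroup L\<^esub> g \<otimes>\<^bsub>BijGroup L\<^esub> v \<otimes>\<^bsub>BijGroup L\<^esub> g)
        \<otimes>\<^bsub>BijGroup L\<^esub> inv\<^bsub>BijGroup L\<^esub> g"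
      using B.conj_inv_conj[of g v] gB vB by simp
    ultimately show "v \<in> (\<lambda>u. g \<otimes>\<^bsub>BijGroup L\<^esub> u \<otimes>\<^bsub>BijGroup L\<^esub> inv\<^bsub>BijGroup L\<^esub> g) ` UL x"
      by blast
  qed
qed

lemma local_moufang_set_lim:
  assumes mt: "more_than_two (L // RL)"
  shows "local_moufang_set L RL UL"
  unfolding local_moufang_set_def
proof (intro conjI ballI impI)
  show "equiv L RL" by (rule equiv_lim_rel)
  show "more_than_two (L // RL)" by (rule mt)
  fix x assume x: "x \<in> L"
  show "subgroup (UL x) (BijGroup L)" by (rule subgroup_lim_root_group[OF x])
  show "UL x \<subseteq> SymR L RL" using lim_root_SymR[OF x] by (auto simp: lim_root_group_eq)
  show "induced L RL ` UL x = induced L RL ` UL y" if "y \<in> L" "(x, y) \<in> RL" for y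
    using lim_induced_root_group_subset[OF mt] x that lim_rel_sym by (meson subset_antisym)
  show "u x = x" and "u ` (L - RL `` {x}) = L - RL `` {x}" if "u \<in> UL x" for u
    using that lim_root_fixes[OF x] lim_root_class_complement[OF x] by (auto simp: lim_root_group_eq)
  show "\<exists>!u. u \<in> UL x \<and> u y = z" if "y \<in> L - RL `` {x}" "z \<in> L - RL `` {x}" for y z
    by (rule lim_root_group_sharply_transitive[OF x that])
  show "v (RL `` {x}) = RL `` {x}" and "v ` (L // RL - {RL `` {x}}) = L // RL - {RL `` {x}}"
    if v: "v \<in> induced L RL ` UL x" for v
  proof -
    obtain u where "u \<in> root_families x" "v = induced L RL (act u)"
      using v by (auto simp: lim_root_group_eq)
    then show "v (RL `` {x}) = RL `` {x}" "v ` (L // RL - {RL `` {x}}) = L // RL - {RL `` {x}}"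
      using lim_induced_root_fixes[OF x] by simp_all
  qed
  show "\<exists>!v. v \<in> induced L RL ` UL x \<and> v C = D"
    if "C \<in> L // RL - {RL `` {x}}" "D \<in> L // RL - {RL `` {x}}" for C D
    by (rule lim_induced_sharply_transitive[OF x that])
  show "(\<lambda>u. g \<otimes>\<^bsub>BijGroup L\<^esub> u \<otimes>\<^bsub>BijGroup L\<^esub> inv\<^bsub>BijGroup L\<^esub> g) ` UL x = UL (g x)"
    if "g \<in> generate (BijGroup L) (\<Union>y\<in>L. UL y)" for g
    by (rule lim_root_group_conj_eq[OF x that])
qed

lemma lim_proj_hom: assumes j: "j \<in> I" shows "lms_hom L RL UL (X j) (R j) (U j) (P j)"
  unfolding lms_hom_def
proof (intro conjI ballI)
  show "P j \<in> L \<rightarrow>\<^sub>E X j" using lim_set_in j by (auto simp: lim_proj_def)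
  fix x assume x: "x \<in> L"
  show "(x, x') \<in> RL \<longleftrightarrow> (P j x, P j x') \<in> R j" if x': "x' \<in> L" for x'
    using lim_rel_iff lim_set_related_transfer[OF x x' j] j x x' by (auto simp: lim_proj_def)
  fix u assume "u \<in> UL x"
  then obtain w where w: "w \<in> root_families x" "u = act w" by (auto simp: lim_root_group_eq)
  show "\<exists>v\<in>U j (P j x). \<forall>y\<in>L. P j (u y) = v (P j y)"
  proof
    show "w j \<in> U j (P j x)" using root_familiesD[OF w(1) j] x by (simp add: lim_proj_def)
    show "\<forall>y\<in>L. P j (u y) = w j (P j y)"
      using act_closed[OF root_families_compatible_perms[OF x w(1)]] act_apply j w(2)
      by (simp add: lim_proj_def)
  qed
qed

lemma lim_proj_compose: "i \<in> I \<Longrightarrow> j \<in> I \<Longrightarrow> ge i j \<Longrightarrow> compose L (\<phi> i j) (P i) = P j"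
  by (rule ext) (simp add: compose_def lim_proj_def lim_set_bonding)

subsection \<open>The universal property\<close>

definition lim_lift :: "'c set \<Rightarrow> ('i \<Rightarrow> 'c \<Rightarrow> 'a) \<Rightarrow> 'c \<Rightarrow> ('i \<Rightarrow> 'a)" where
  "lim_lift Y q = (\<lambda>y\<in>Y. \<lambda>i\<in>I. q i y)"

context
  fixes Y :: "'c set" and S V and q :: "'i \<Rightarrow> 'c \<Rightarrow> 'a"
  assumes lms_Y: "local_moufang_set Y S V"
    and q_hom: "\<And>i. i \<in> I \<Longrightarrow> lms_hom Y S V (X i) (R i) (U i) (q i)"
    and q_compose: "\<And>i j. i \<in> I \<Longrightarrow> j \<in> I \<Longrightarrow> ge i j \<Longrightarrow> compose Y (\<phi> i j) (q i) = q j"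
begin

lemma cone_in: "i \<in> I \<Longrightarrow> y \<in> Y \<Longrightarrow> q i y \<in> X i"
  using q_hom unfolding lms_hom_def by blast

lemma cone_related_iff: "i \<in> I \<Longrightarrow> y \<in> Y \<Longrightarrow> y' \<in> Y \<Longrightarrow> (y, y') \<in> S \<longleftrightarrow> (q i y, q i y') \<in> R i"
  using q_hom unfolding lms_hom_def by blast

lemma cone_root: "i \<in> I \<Longrightarrow> y \<in> Y \<Longrightarrow> u \<in> V y \<Longrightarrow> \<exists>v\<in>U i (q i y). \<forall>z\<in>Y. q i (u z) = v (q i z)"
  using q_hom unfolding lms_hom_def by blast

lemma cone_bonding: "i \<in> I \<Longrightarrow> j \<in> I \<Longrightarrow> ge i j \<Longrightarrow> y \<in> Y \<Longrightarrow> \<phi> i j (q i y) = q j y"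
  using q_compose[of i j] by (auto simp: compose_def dest: fun_cong[of _ _ y])

lemma lim_lift_in: "y \<in> Y \<Longrightarrow> lim_lift Y q y \<in> L"
  by (rule lim_setI) (auto simp: lim_lift_def cone_in cone_bonding)

lemma lim_lift_apply: "y \<in> Y \<Longrightarrow> i \<in> I \<Longrightarrow> lim_lift Y q y i = q i y"
  by (simp add: lim_lift_def)

lemma lim_lift_root:
  assumes y: "y \<in> Y" and u: "u \<in> V y"
  shows "\<exists>v\<in>UL (lim_lift Y q y). \<forall>z\<in>Y. lim_lift Y q (u z) = v (lim_lift Y q z)"
proof -
  let ?\<psi> = "lim_lift Y q"
  have uB: "u \<in> Bij Y" by (rule lms_Bij[OF lms_Y y u])
  obtain z0 where z0: "z0 \<in> Y" "(y, z0) \<notin> S"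
    using quotient_more_than_two_ex_unrelated[OF lms_equiv[OF lms_Y] _ y] lms_Y
    by (auto simp: local_moufang_set_def)
  have "\<forall>i\<in>I. \<exists>v. v \<in> U i (q i y) \<and> (\<forall>z\<in>Y. q i (u z) = v (q i z))"
    using cone_root[OF _ y u] by blast
  then obtain w where w: "\<And>i. i \<in> I \<Longrightarrow> w i \<in> U i (q i y) \<and> (\<forall>z\<in>Y. q i (u z) = w i (q i z))"
    by metis
  have "(?\<psi> y, ?\<psi> z0) \<notin> RL"
    using cone_related_iff[OF _ y z0(1)] z0(2) index_nonempty
    by (auto simp: lim_rel_iff lim_lift_apply y z0(1))
  moreover have "\<phi> i j (w i (q i z0)) = w j (q j z0)" if ij: "i \<in> I" "j \<in> I" "ge i j" for i j
  proof -
    have "\<phi> i j (w i (q i z0)) = \<phi> i j (q i (u z0))" using w[OF ij(1)] z0(1) by simp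
    also have "\<dots> = q j (u z0)" by (rule cone_bonding[OF ij Bij_apply[OF uB z0(1)]])
    also have "\<dots> = w j (q j z0)" using w[OF ij(2)] z0(1) by simp
    finally show ?thesis .
  qed
  ultimately have "compatible_family (restrict w I)"
    using compatible_root_family[OF lim_lift_in[OF y] lim_lift_in[OF z0(1)], of "restrict w I"] w
      y z0(1) by (simp add: lim_lift_apply)
  then have wR: "restrict w I \<in> root_families (?\<psi> y)"
    using w by (simp add: root_families_def lim_lift_apply y)
  have "?\<psi> (u z) = act (restrict w I) (?\<psi> z)" if z: "z \<in> Y" for z
    by (rule lim_set_eqI[OF lim_lift_in[OF Bij_apply[OF uB z]]
          act_closed[OF root_families_compatible_perms[OF lim_lift_in[OF y] wR] lim_lift_in[OF z]]])
       (simp add: lim_lift_apply act_apply lim_lift_in z Bij_apply[OF uB z] w)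
  then show ?thesis using wR by (auto simp: lim_root_group_eq)
qed

lemma lim_lift_hom: "lms_hom Y S V L RL UL (lim_lift Y q)"
  unfolding lms_hom_def
proof (intro conjI ballI)
  show "lim_lift Y q \<in> Y \<rightarrow>\<^sub>E L" using lim_lift_in by (auto simp: lim_lift_def)
  fix y y' assume y: "y \<in> Y" and y': "y' \<in> Y"
  obtain i where i: "i \<in> I" using index_nonempty by blast
  show "(y, y') \<in> S \<longleftrightarrow> (lim_lift Y q y, lim_lift Y q y') \<in> RL"
    using lim_set_related_ex_iff_all[OF lim_lift_in[OF y] lim_lift_in[OF y']] cone_related_iff[OF _ y y'] i
    by (auto simp: lim_rel_iff lim_lift_in y y' lim_lift_apply)
qed (rule lim_lift_root)

lemma lim_proj_lim_lift: assumes i: "i \<in> I" shows "compose Y (P i) (lim_lift Y q) = q i"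
proof
  fix y show "compose Y (P i) (lim_lift Y q) y = q i y"
    using q_hom[OF i] by (cases "y \<in> Y")
      (auto simp: compose_def lim_proj_def lim_lift_in lim_lift_apply i lms_hom_def PiE_def extensional_def)
qed

lemma lim_universal: "\<exists>!\<psi>. lms_hom Y S V L RL UL \<psi> \<and> (\<forall>i\<in>I. compose Y (P i) \<psi> = q i)"
proof (rule ex1I[of _ "lim_lift Y q"])
  show "lms_hom Y S V L RL UL (lim_lift Y q) \<and> (\<forall>i\<in>I. compose Y (P i) (lim_lift Y q) = q i)"
    using lim_lift_hom lim_proj_lim_lift by blast
  fix \<psi> assume \<psi>: "lms_hom Y S V L RL UL \<psi> \<and> (\<forall>i\<in>I. compose Y (P i) \<psi> = q i)"
  then have \<psi>f: "\<psi> \<in> Y \<rightarrow>\<^sub>E L" by (simp add: lms_hom_def)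
  show "\<psi> = lim_lift Y q"
  proof
    fix y show "\<psi> y = lim_lift Y q y"
    proof (cases "y \<in> Y")
      case True
      show ?thesis
      proof (rule lim_set_eqI[OF _ lim_lift_in[OF True]])
        show "\<psi> y \<in> L" using \<psi>f True by blast
        fix i assume i: "i \<in> I"
        have "compose Y (P i) \<psi> y = q i y" using \<psi> i by simp
        then show "\<psi> y i = lim_lift Y q y i"
          using True \<open>\<psi> y \<in> L\<close> i by (simp add: compose_def lim_proj_def lim_lift_apply)
      qed
    qed (use \<psi>f in \<open>auto simp: lim_lift_def\<close>)
  qed
qed

end

end

theorem mainTheorem12:
  fixes I :: "'i set" and ge :: "'i \<Rightarrow> 'i \<Rightarrow> bool"
    and X :: "'i \<Rightarrow> 'a set" and R :: "'i \<Rightarrow> ('a \<times> 'a) set"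
    and U :: "'i \<Rightarrow> 'a \<Rightarrow> ('a \<Rightarrow> 'a) set" and \<phi> :: "'i \<Rightarrow> 'i \<Rightarrow> 'a \<Rightarrow> 'a"
  assumes sys: "inverse_system I ge X R U \<phi>"
  defines "L \<equiv> lim_set I ge X \<phi>"
    and "RL \<equiv> lim_rel I ge X R \<phi>"
    and "UL \<equiv> lim_root_group I ge X U \<phi>"
    and "p \<equiv> lim_proj I ge X \<phi>"
  shows "(\<forall>x\<in>L. \<forall>y\<in>L. (\<exists>i\<in>I. (x i, y i) \<in> R i) \<longleftrightarrow> (\<forall>i\<in>I. (x i, y i) \<in> R i))
    \<and> equiv L RL
    \<and> (more_than_two (L // RL) \<longrightarrow>
        local_moufang_set L RL UL
        \<and> (\<forall>j\<in>I. lms_hom L RL UL (X j) (R j) (U j) (p j))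
        \<and> (\<forall>i\<in>I. \<forall>j\<in>I. ge i j \<longrightarrow> compose L (\<phi> i j) (p i) = p j)
        \<and> (\<forall>(Y :: 'c set) S V q.
              local_moufang_set Y S V
              \<and> (\<forall>i\<in>I. lms_hom Y S V (X i) (R i) (U i) (q i))
              \<and> (\<forall>i\<in>I. \<forall>j\<in>I. ge i j \<longrightarrow> compose Y (\<phi> i j) (q i) = q j)
              \<longrightarrow> (\<exists>!\<psi>. lms_hom Y S V L RL UL \<psi> \<and> (\<forall>i\<in>I. compose Y (p i) \<psi> = q i))))"
proof -
  interpret inverse_limit I ge X R U \<phi> by (rule inverse_limit.intro[OF sys])
  have "\<exists>!\<psi>. lms_hom Y S V L RL UL \<psi> \<and> (\<forall>i\<in>I. compose Y (p i) \<psi> = q i)"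
    if "local_moufang_set Y S V" "\<forall>i\<in>I. lms_hom Y S V (X i) (R i) (U i) (q i)"
      "\<forall>i\<in>I. \<forall>j\<in>I. ge i j \<longrightarrow> compose Y (\<phi> i j) (q i) = q j" for Y :: "'c set" and S V q
    unfolding L_def RL_def UL_def p_def using that by (intro lim_universal) auto
  then show ?thesis
    unfolding L_def RL_def UL_def p_def
    using lim_set_related_ex_iff_all equiv_lim_rel local_moufang_set_lim lim_proj_hom lim_proj_compose
    by auto
qed

end
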